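(* Let $F$ be an Archimedean vector lattice with universal completion $F^{u}$, and let $E$ be a regular sublattice of $F$. Then the order closure $\overline{E}^{F^{u}}_{o}$ of $E$ viewed as a sublattice of $F^{u}$ is the universal completion of $E$ (i.e. it is universally complete and contains $E$ as an order dense sublattice), and $\overline{E}^{F}_{o}=\overline{E}^{F^{u}}_{o}\cap F$.
   Context: An order complete vector lattice is universally complete if every set of pairwise disjoint elements is order bounded. The universal completion $F^u$ of an Archimedean $F$ is the (unique) universally complete vector lattice containing $F$ as an order dense sublattice. Order convergence: a net converges to $f$ if there is a set $G$ with $\bigwedge G=0$ such that for each $g\in G$ the net is eventually in $[f-g,f+g]$. A set is order closed if it contains order limits of all its nets; the order closure $\overline{E}_o$ (in a given ambient lattice) is the intersection of all order closed sets containing $E$. A sublattice $E\subset F$ is regular if $\bigwedge_E G=0$ implies $\bigwedge_F G=0$ for all $G\subset E$; it is order dense in $H\supset E$ if each $h>0$ in $H$ dominates some $e\in E$ with $e>0$. *)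

theory Defs
  imports Complex_Main
begin

text \<open>Vector lattices: an ambient type of class ordered_real_vector and lattice
 (the lattice order is the vector order).  All notions below are relative to a
 carrier set S of the ambient type, ordered and operated on as in the ambient type.\<close>

definition vabs :: "'a::{ordered_real_vector,lattice} \<Rightarrow> 'a" where
  "vabs x = sup x (- x)"

definition riesz_subspace :: "'a::{ordered_real_vector,lattice} set \<Rightarrow> bool" where
  "riesz_subspace S \<longleftrightarrow> 0 \<in> S \<and>
     (\<forall>x\<in>S. \<forall>y\<in>S. x + y \<in> S) \<and>
     (\<forall>c::real. \<forall>x\<in>S. c *\<^sub>R x \<in> S) \<and>
     (\<forall>x\<in>S. \<forall>y\<in>S. sup x y \<in> S \<and> inf x y \<in> S)"

definition is_inf_in :: "'a::{ordered_real_vector,lattice} set \<Rightarrow> 'a set \<Rightarrow> 'a \<Rightarrow> bool" where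
  "is_inf_in S G x \<longleftrightarrow> x \<in> S \<and> (\<forall>g\<in>G. x \<le> g) \<and>
     (\<forall>y\<in>S. (\<forall>g\<in>G. y \<le> g) \<longrightarrow> y \<le> x)"

definition is_sup_in :: "'a::{ordered_real_vector,lattice} set \<Rightarrow> 'a set \<Rightarrow> 'a \<Rightarrow> bool" where
  "is_sup_in S G x \<longleftrightarrow> x \<in> S \<and> (\<forall>g\<in>G. g \<le> x) \<and>
     (\<forall>y\<in>S. (\<forall>g\<in>G. g \<le> y) \<longrightarrow> x \<le> y)"

definition archimedean_on :: "'a::{ordered_real_vector,lattice} set \<Rightarrow> bool" where
  "archimedean_on S \<longleftrightarrow>
     (\<forall>x\<in>S. \<forall>y\<in>S. 0 \<le> x \<and> (\<forall>n::nat. real n *\<^sub>R x \<le> y) \<longrightarrow> x = 0)"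

definition order_complete_on :: "'a::{ordered_real_vector,lattice} set \<Rightarrow> bool" where
  "order_complete_on S \<longleftrightarrow>
     (\<forall>A\<subseteq>S. A \<noteq> {} \<and> (\<exists>u\<in>S. \<forall>a\<in>A. a \<le> u) \<longrightarrow> (\<exists>s. is_sup_in S A s))"

definition pairwise_disjoint :: "'a::{ordered_real_vector,lattice} set \<Rightarrow> bool" where
  "pairwise_disjoint D \<longleftrightarrow> (\<forall>x\<in>D. \<forall>y\<in>D. x \<noteq> y \<longrightarrow> inf (vabs x) (vabs y) = 0)"

definition order_bounded_in :: "'a::{ordered_real_vector,lattice} set \<Rightarrow> 'a set \<Rightarrow> bool" where
  "order_bounded_in S D \<longleftrightarrow> (\<exists>a\<in>S. \<exists>b\<in>S. \<forall>x\<in>D. a \<le> x \<and> x \<le> b)"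

definition universally_complete :: "'a::{ordered_real_vector,lattice} set \<Rightarrow> bool" where
  "universally_complete S \<longleftrightarrow> riesz_subspace S \<and> order_complete_on S \<and>
     (\<forall>D\<subseteq>S. pairwise_disjoint D \<longrightarrow> order_bounded_in S D)"

definition order_dense_in :: "'a::{ordered_real_vector,lattice} set \<Rightarrow> 'a set \<Rightarrow> bool" where
  "order_dense_in H E \<longleftrightarrow> (\<forall>h\<in>H. 0 < h \<longrightarrow> (\<exists>e\<in>E. 0 < e \<and> e \<le> h))"

definition regular_in :: "'a::{ordered_real_vector,lattice} set \<Rightarrow> 'a set \<Rightarrow> bool" where
  "regular_in F E \<longleftrightarrow> (\<forall>G\<subseteq>E. is_inf_in E G 0 \<longrightarrow> is_inf_in F G 0)"

text \<open>Order convergence in S of a net x indexed along the filter N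
 (a net over a directed index set D corresponds to N = the filter of tails of D).\<close>
definition order_conv_in ::
  "'a::{ordered_real_vector,lattice} set \<Rightarrow> ('i \<Rightarrow> 'a) \<Rightarrow> 'i filter \<Rightarrow> 'a \<Rightarrow> bool" where
  "order_conv_in S x N f \<longleftrightarrow> f \<in> S \<and>
     (\<exists>G\<subseteq>S. is_inf_in S G 0 \<and>
        (\<forall>g\<in>G. eventually (\<lambda>i. f - g \<le> x i \<and> x i \<le> f + g) N))"

text \<open>A \<subseteq> S is order closed in S: it contains order limits (in S) of all nets
 in A.  Nets are represented by proper filters on the ambient type (the image
 filter of the net).\<close>
definition order_closed_in :: "'a::{ordered_real_vector,lattice} set \<Rightarrow> 'a set \<Rightarrow> bool" where
  "order_closed_in S A \<longleftrightarrow>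
     (\<forall>N::'a filter. \<forall>f. N \<noteq> bot \<and> eventually (\<lambda>y. y \<in> A) N \<and>
        order_conv_in S (\<lambda>y. y) N f \<longrightarrow> f \<in> A)"

definition order_closure_in :: "'a::{ordered_real_vector,lattice} set \<Rightarrow> 'a set \<Rightarrow> 'a set" where
  "order_closure_in S E = \<Inter>{A. A \<subseteq> S \<and> E \<subseteq> A \<and> order_closed_in S A}"

end

theory Submission
  imports Defs "HOL-Library.Lattice_Algebras"
begin

text \<open>
Write C for the order closure of E in the universal completion. Translations, scalings and the
lattice operations are Lipschitz for the modulus, hence order continuous, so C is a Riesz
subspace. Suprema of bounded subsets of C are order limits of upward directed subsets, so C,
being order closed in a universally complete space, is itself universally complete.

The substance is that E is order dense in C. Call w squeezed by E if it lies between elements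
of E and the gaps b - a of such enclosures have infimum 0. Regularity of E and the Archimedean
property show that an enclosed w which is the infimum of its majorants in E is squeezed. Hence
squeezed elements are stable under bounded infima, bounded suprema and, since an order limit is
the supremum of the infima of the tails, under bounded order limits. So for y in C and
0 \<le> e in E the truncation (y \<squnion> 0) \<sqinter> e is squeezed, hence the supremum of its minorants
in E; moreover C lies in the band generated by E. If v majorizes all minorants in E of some
y \<ge> 0 in C, then y - y \<sqinter> v is disjoint from E and lies below y, so it vanishes: y is the
supremum of its minorants in E.

Finally, a positive element of C \<inter> F is in F the supremum of the directed set of its minorants
in E, so it lies in the order closure of E in F; regularity of F in the universal completion
gives the converse inclusion.
\<close>

section \<open>Elementary facts on vector lattices\<close>

text \<open>The sort of the ambient space is not a subclass of \<^class>\<open>lattice_ab_group_add_abs\<close>,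
  so the lattice-ordered group facts of the library are obtained by interpretation, with
  \<^const>\<open>vabs\<close> as modulus.\<close>

interpretation vector_lattice:
  lattice_ab_group_add_abs vabs "(+)" "0::'a::{ordered_real_vector,lattice}" "(-)" uminus
    "(\<le>)" "(<)" inf sup
  by unfold_locales (rule vabs_def)

lemma pos_part_inf_neg_part_eq_0:
  fixes t :: "'a::{ordered_real_vector,lattice}"
  shows "inf (sup t 0) (sup (- t) 0) = 0"
proof -
  define n where "n = sup (- t) 0"
  have "n + t = sup 0 t"
    by (simp add: n_def vector_lattice.add_sup_distrib_right)
  have neg: "inf t 0 = - n"
    by (simp add: n_def vector_lattice.neg_sup_eq_inf)
  have "inf (sup t 0) n = inf (t + n) (0 + n)"
    using \<open>n + t = sup 0 t\<close>
    by (simp add: sup_commute add.commute)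
  also have "\<dots> = inf t 0 + n"
    by (rule vector_lattice.add_inf_distrib_right[symmetric])
  also have "\<dots> = 0"
    using neg by simp
  finally show ?thesis by (simp add: n_def)
qed

lemma inf_add_le_add_inf:
  fixes a b c :: "'a::{ordered_real_vector,lattice}"
  assumes "0 \<le> a" "0 \<le> b" "0 \<le> c"
  shows "inf (a + b) c \<le> inf a c + inf b c"
proof -
  define d where "d = inf (a + b) c"
  have "d - inf a c = sup (d - a) (d - c)"
    by (simp add: vector_lattice.add_sup_distrib_left)
  also have "\<dots> \<le> b"
    using assms by (auto simp: d_def diff_le_eq add.commute le_infI1 le_infI2 add_increasing)
  finally have "d - inf a c \<le> b" .
  moreover have "d - inf a c \<le> d - 0"
    using assms by (intro diff_left_mono) simp
  then have "d - inf a c \<le> c"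
    by (simp add: d_def)
  ultimately have "d - inf a c \<le> inf b c"
    by (rule inf_greatest)
  then show ?thesis
    unfolding d_def by (metis diff_le_eq add.commute)
qed

lemma inf_scaleR_of_nat_le:
  fixes q u :: "'a::{ordered_real_vector,lattice}"
  assumes "0 \<le> q" "0 \<le> u"
  shows "inf (real n *\<^sub>R q) u \<le> real n *\<^sub>R inf q u"
proof (induction n)
  case 0
  then show ?case using assms by (simp add: le_infI2)
next
  case (Suc n)
  have "inf (real (Suc n) *\<^sub>R q) u = inf (real n *\<^sub>R q + q) u"
    by (simp add: algebra_simps)
  also have "\<dots> \<le> inf (real n *\<^sub>R q) u + inf q u"
    using assms by (intro inf_add_le_add_inf) (simp_all add: scaleR_nonneg_nonneg)
  also have "\<dots> \<le> real n *\<^sub>R inf q u + inf q u"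
    using Suc by simp
  finally show ?case by (simp add: algebra_simps)
qed

lemma scaleR_le_if_le_pos_part:
  fixes q y :: "'a::{ordered_real_vector,lattice}"
  assumes q: "0 \<le> q" and y: "0 \<le> y" and le: "q \<le> sup (y - real n *\<^sub>R q) 0"
  shows "real n *\<^sub>R q \<le> y"
proof -
  define t where "t = sup (real n *\<^sub>R q - y) 0"
  have "inf q t \<le> inf (sup (y - real n *\<^sub>R q) 0) (sup (- (y - real n *\<^sub>R q)) 0)"
    using le by (intro inf_mono) (simp_all add: t_def)
  also have "\<dots> = 0"
    by (rule pos_part_inf_neg_part_eq_0)
  finally have qt: "inf q t = 0"
    using q by (simp add: t_def antisym)
  have "t \<le> real n *\<^sub>R q"
    using q y by (simp add: t_def scaleR_nonneg_nonneg)
  then have "t = inf (real n *\<^sub>R q) t"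
    by (simp add: inf_absorb2)
  also have "\<dots> \<le> real n *\<^sub>R inf q t"
    using q by (intro inf_scaleR_of_nat_le) (simp_all add: t_def)
  finally have "t \<le> 0"
    by (simp add: qt)
  then show ?thesis
    by (simp add: t_def)
qed

lemma vabs_diff_le_if_mono_shift_le:
  fixes h :: "'a::{ordered_real_vector,lattice} \<Rightarrow> 'a"
  assumes mono: "\<And>x y. x \<le> y \<Longrightarrow> h x \<le> h y"
    and shift: "\<And>x d. 0 \<le> d \<Longrightarrow> h (x + d) \<le> h x + d"
  shows "vabs (h x - h y) \<le> vabs (x - y)"
proof -
  have "h x - h y \<le> vabs (x - y)" for x y
  proof -
    have "x \<le> y + vabs (x - y)"
      using vector_lattice.abs_ge_self[of "x - y"] by (simp add: diff_le_eq add.commute)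
    then have "h x \<le> h (y + vabs (x - y))"
      by (rule mono)
    also have "\<dots> \<le> h y + vabs (x - y)"
      by (simp add: shift)
    finally show ?thesis
      by (metis diff_le_eq add.commute)
  qed
  from this[of x y] this[of y x] show ?thesis
    by (metis vector_lattice.abs_leI vector_lattice.abs_minus_commute minus_diff_eq)
qed

lemma vabs_sup_diff_le:
  fixes x y c :: "'a::{ordered_real_vector,lattice}"
  shows "vabs (sup x c - sup y c) \<le> vabs (x - y)"
proof (rule vabs_diff_le_if_mono_shift_le)
  fix x d :: 'a
  assume "0 \<le> d"
  then have "sup (x + d) c \<le> sup (x + d) (c + d)"
    by (simp add: le_supI2)
  then show "sup (x + d) c \<le> sup x c + d"
    by (simp add: vector_lattice.add_sup_distrib_right)
qed (rule sup_mono, simp_all)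

lemma vabs_inf_diff_le:
  fixes x y c :: "'a::{ordered_real_vector,lattice}"
  shows "vabs (inf x c - inf y c) \<le> vabs (x - y)"
proof (rule vabs_diff_le_if_mono_shift_le)
  fix x d :: 'a
  assume "0 \<le> d"
  then have "inf (x + d) c \<le> inf (x + d) (c + d)"
    by (simp add: le_infI2)
  then show "inf (x + d) c \<le> inf x c + d"
    by (simp add: vector_lattice.add_inf_distrib_right)
qed (rule inf_mono, simp_all)

lemma vabs_scaleR_diff_le:
  fixes x y :: "'a::{ordered_real_vector,lattice}"
  shows "vabs (c *\<^sub>R x - c *\<^sub>R y) \<le> \<bar>c\<bar> *\<^sub>R vabs (x - y)"
proof -
  have "\<bar>c\<bar> *\<^sub>R (x - y) \<le> \<bar>c\<bar> *\<^sub>R vabs (x - y)" "\<bar>c\<bar> *\<^sub>R (y - x) \<le> \<bar>c\<bar> *\<^sub>R vabs (x - y)"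
    using vector_lattice.abs_ge_self[of "x - y"] vector_lattice.abs_ge_minus_self[of "x - y"]
    by (auto intro!: scaleR_left_mono)
  moreover have "c *\<^sub>R x - c *\<^sub>R y = \<bar>c\<bar> *\<^sub>R (x - y) \<or> c *\<^sub>R x - c *\<^sub>R y = \<bar>c\<bar> *\<^sub>R (y - x)"
    by (cases "0 \<le> c") (simp_all add: scaleR_diff_right)
  ultimately show ?thesis
    by (auto intro: vector_lattice.abs_leI simp: scaleR_diff_right)
qed

lemma
  assumes "riesz_subspace S"
  shows riesz_subspace_zero: "0 \<in> S"
    and riesz_subspace_add: "x \<in> S \<Longrightarrow> y \<in> S \<Longrightarrow> x + y \<in> S"
    and riesz_subspace_scaleR: "x \<in> S \<Longrightarrow> c *\<^sub>R x \<in> S"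
    and riesz_subspace_sup: "x \<in> S \<Longrightarrow> y \<in> S \<Longrightarrow> sup x y \<in> S"
    and riesz_subspace_inf: "x \<in> S \<Longrightarrow> y \<in> S \<Longrightarrow> inf x y \<in> S"
  using assms by (simp_all add: riesz_subspace_def)

lemma riesz_subspace_uminus: "riesz_subspace S \<Longrightarrow> x \<in> S \<Longrightarrow> - x \<in> S"
  using riesz_subspace_scaleR[of S x "- 1"] by simp

lemma riesz_subspace_diff: "riesz_subspace S \<Longrightarrow> x \<in> S \<Longrightarrow> y \<in> S \<Longrightarrow> x - y \<in> S"
  using riesz_subspace_add[of S x "- y"] riesz_subspace_uminus[of S y] by simp

lemma riesz_subspace_vabs: "riesz_subspace S \<Longrightarrow> x \<in> S \<Longrightarrow> vabs x \<in> S"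
  by (simp add: vabs_def riesz_subspace_sup riesz_subspace_uminus)

lemma riesz_subspace_UNIV: "riesz_subspace (UNIV :: 'a::{ordered_real_vector,lattice} set)"
  by (simp add: riesz_subspace_def)

section \<open>Order convergence and order closure\<close>

lemma interval_iff_vabs_diff_le:
  fixes f g x :: "'a::{ordered_real_vector,lattice}"
  shows "(f - g \<le> x \<and> x \<le> f + g) \<longleftrightarrow> vabs (x - f) \<le> g"
  by (auto simp: vector_lattice.abs_le_iff diff_le_eq le_diff_eq add.commute)

lemma order_conv_in_iff_vabs:
  "order_conv_in S (\<lambda>x. x) N f \<longleftrightarrow>
     f \<in> S \<and> (\<exists>G\<subseteq>S. is_inf_in S G 0 \<and> (\<forall>g\<in>G. eventually (\<lambda>x. vabs (x - f) \<le> g) N))"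
  by (simp only: order_conv_in_def interval_iff_vabs_diff_le)

lemma is_inf_in_scaleR:
  fixes G :: "'a::{ordered_real_vector,lattice} set"
  assumes S: "riesz_subspace S" and c: "0 < c" and G: "is_inf_in S G 0"
  shows "is_inf_in S ((\<lambda>g. c *\<^sub>R g) ` G) 0"
  unfolding is_inf_in_def
proof (intro conjI ballI impI)
  show "0 \<in> S"
    using G by (simp add: is_inf_in_def)
  fix g
  assume "g \<in> (\<lambda>g. c *\<^sub>R g) ` G"
  then show "0 \<le> g"
    using G c by (auto simp: is_inf_in_def intro!: scaleR_nonneg_nonneg)
next
  fix z
  assume z: "z \<in> S" and lower: "\<forall>g\<in>(\<lambda>g. c *\<^sub>R g) ` G. z \<le> g"
  have "(1 / c) *\<^sub>R z \<le> g" if "g \<in> G" for g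
    using scaleR_left_mono[of z "c *\<^sub>R g" "1 / c"] lower that c by simp
  then have "(1 / c) *\<^sub>R z \<le> 0"
    using G riesz_subspace_scaleR[OF S z] by (simp add: is_inf_in_def)
  then show "z \<le> 0"
    using scaleR_left_mono[of "(1 / c) *\<^sub>R z" 0 c] c by simp
qed

lemma order_conv_in_lipschitz:
  fixes h :: "'a::{ordered_real_vector,lattice} \<Rightarrow> 'a"
  assumes S: "riesz_subspace S" and L: "0 \<le> L"
    and lip: "\<And>x y. vabs (h x - h y) \<le> L *\<^sub>R vabs (x - y)"
    and conv: "order_conv_in S (\<lambda>x. x) N f" and hf: "h f \<in> S"
  shows "order_conv_in S (\<lambda>x. x) (filtermap h N) (h f)"
proof -
  obtain G where G: "G \<subseteq> S" "is_inf_in S G 0"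
    and ev: "\<forall>g\<in>G. eventually (\<lambda>x. vabs (x - f) \<le> g) N"
    using conv by (auto simp: order_conv_in_iff_vabs)
  \<comment> \<open>Scaling by \<open>L + 1\<close> rather than \<open>L\<close> keeps the factor positive.\<close>
  have "vabs (h x - h f) \<le> (L + 1) *\<^sub>R g" if "g \<in> G" "vabs (x - f) \<le> g" for g x
  proof -
    have "0 \<le> g"
      using G(2) \<open>g \<in> G\<close> by (auto simp: is_inf_in_def)
    have "vabs (h x - h f) \<le> L *\<^sub>R vabs (x - f)"
      by (rule lip)
    also have "\<dots> \<le> L *\<^sub>R g"
      using \<open>vabs (x - f) \<le> g\<close> L by (rule scaleR_left_mono)
    also have "\<dots> \<le> (L + 1) *\<^sub>R g"
      using \<open>0 \<le> g\<close> by (simp add: scaleR_add_left)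
    finally show ?thesis .
  qed
  then have "\<forall>g\<in>G. eventually (\<lambda>x. vabs (x - h f) \<le> (L + 1) *\<^sub>R g) (filtermap h N)"
    using ev unfolding eventually_filtermap by (metis (mono_tags, lifting) eventually_mono)
  moreover have "(\<lambda>g. (L + 1) *\<^sub>R g) ` G \<subseteq> S"
    using G(1) S by (auto intro: riesz_subspace_scaleR)
  moreover have "is_inf_in S ((\<lambda>g. (L + 1) *\<^sub>R g) ` G) 0"
    using S L G(2) by (intro is_inf_in_scaleR) auto
  ultimately show ?thesis
    unfolding order_conv_in_iff_vabs using hf by blast
qed

lemma order_closed_inD:
  "order_closed_in S A \<Longrightarrow> N \<noteq> bot \<Longrightarrow> eventually (\<lambda>x. x \<in> A) N \<Longrightarrow>
    order_conv_in S (\<lambda>x. x) N f \<Longrightarrow> f \<in> A"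
  by (auto simp: order_closed_in_def)

lemma order_closed_in_self: "order_closed_in S S"
  by (auto simp: order_closed_in_def order_conv_in_def)

lemma order_closed_in_Int:
  assumes A: "order_closed_in S A" and B: "order_closed_in S B"
  shows "order_closed_in S (A \<inter> B)"
  unfolding order_closed_in_def
proof (intro allI impI)
  fix N :: "'a filter" and f
  assume N: "N \<noteq> bot \<and> eventually (\<lambda>x. x \<in> A \<inter> B) N \<and> order_conv_in S (\<lambda>x. x) N f"
  then have "eventually (\<lambda>x. x \<in> A) N" "eventually (\<lambda>x. x \<in> B) N"
    by (auto elim: eventually_mono)
  with N show "f \<in> A \<inter> B"
    using order_closed_inD[OF A] order_closed_inD[OF B] by blast
qed

lemma subset_order_closure_in: "E \<subseteq> order_closure_in S E"
  by (auto simp: order_closure_in_def)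

lemma order_closure_in_subset: "E \<subseteq> S \<Longrightarrow> order_closure_in S E \<subseteq> S"
  unfolding order_closure_in_def using order_closed_in_self[of S] by blast

lemma order_closure_in_minimal:
  "A \<subseteq> S \<Longrightarrow> E \<subseteq> A \<Longrightarrow> order_closed_in S A \<Longrightarrow> order_closure_in S E \<subseteq> A"
  unfolding order_closure_in_def by blast

lemma order_closed_order_closure_in: "order_closed_in S (order_closure_in S E)"
  unfolding order_closed_in_def order_closure_in_def
  by (blast dest: order_closed_inD intro: eventually_mono)

lemma order_closed_in_vimage:
  fixes h :: "'a::{ordered_real_vector,lattice} \<Rightarrow> 'a"
  assumes S: "riesz_subspace S" and L: "0 \<le> L" and hS: "\<And>x. x \<in> S \<Longrightarrow> h x \<in> S"
    and lip: "\<And>x y. vabs (h x - h y) \<le> L *\<^sub>R vabs (x - y)"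
    and A: "order_closed_in S A"
  shows "order_closed_in S {x \<in> S. h x \<in> A}"
  unfolding order_closed_in_def
proof (intro allI impI)
  fix N :: "'a filter" and f
  assume "N \<noteq> bot \<and> eventually (\<lambda>x. x \<in> {x \<in> S. h x \<in> A}) N \<and> order_conv_in S (\<lambda>x. x) N f"
  then have N: "N \<noteq> bot" and ev: "eventually (\<lambda>x. h x \<in> A) N"
    and conv: "order_conv_in S (\<lambda>x. x) N f"
    by (auto elim: eventually_mono)
  have "f \<in> S"
    using conv by (simp add: order_conv_in_def)
  moreover have "h f \<in> A"
  proof (rule order_closed_inD[OF A])
    show "filtermap h N \<noteq> bot"
      using N by (simp add: filtermap_bot_iff)
    show "eventually (\<lambda>x. x \<in> A) (filtermap h N)"
      using ev by (simp add: eventually_filtermap)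
    show "order_conv_in S (\<lambda>x. x) (filtermap h N) (h f)"
      using S L lip conv hS[OF \<open>f \<in> S\<close>] by (rule order_conv_in_lipschitz)
  qed
  ultimately show "f \<in> {x \<in> S. h x \<in> A}"
    by simp
qed

lemma order_closure_in_lipschitz_image:
  fixes h :: "'a::{ordered_real_vector,lattice} \<Rightarrow> 'a"
  assumes S: "riesz_subspace S" and ES: "E \<subseteq> S" and L: "0 \<le> L"
    and hS: "\<And>x. x \<in> S \<Longrightarrow> h x \<in> S"
    and lip: "\<And>x y. vabs (h x - h y) \<le> L *\<^sub>R vabs (x - y)"
    and hE: "\<And>x. x \<in> E \<Longrightarrow> h x \<in> order_closure_in S E"
    and x: "x \<in> order_closure_in S E"
  shows "h x \<in> order_closure_in S E"
proof -
  let ?K = "order_closure_in S E"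
  have "?K \<subseteq> ?K \<inter> {x \<in> S. h x \<in> ?K}"
  proof (rule order_closure_in_minimal)
    show "?K \<inter> {x \<in> S. h x \<in> ?K} \<subseteq> S"
      by blast
    show "E \<subseteq> ?K \<inter> {x \<in> S. h x \<in> ?K}"
      using subset_order_closure_in ES hE by blast
    show "order_closed_in S (?K \<inter> {x \<in> S. h x \<in> ?K})"
      by (intro order_closed_in_Int order_closed_order_closure_in
          order_closed_in_vimage[OF S L hS lip])
  qed
  with x show ?thesis
    by blast
qed

lemma order_closure_in_closed_under_commutative:
  fixes f :: "'a::{ordered_real_vector,lattice} \<Rightarrow> 'a \<Rightarrow> 'a"
  assumes S: "riesz_subspace S" and ES: "E \<subseteq> S"
    and fS: "\<And>x y. x \<in> S \<Longrightarrow> y \<in> S \<Longrightarrow> f x y \<in> S"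
    and fE: "\<And>x y. x \<in> E \<Longrightarrow> y \<in> E \<Longrightarrow> f x y \<in> E"
    and comm: "\<And>x y. f x y = f y x"
    and lip: "\<And>x y c. vabs (f x c - f y c) \<le> vabs (x - y)"
    and x: "x \<in> order_closure_in S E" and y: "y \<in> order_closure_in S E"
  shows "f x y \<in> order_closure_in S E"
proof -
  let ?K = "order_closure_in S E"
  have KS: "?K \<subseteq> S"
    using ES by (rule order_closure_in_subset)
  have lip1: "vabs (f x c - f y c) \<le> 1 *\<^sub>R vabs (x - y)" for x y c
    using lip by simp
  have E_K: "f x c \<in> ?K" if "c \<in> E" "x \<in> ?K" for c x
    by (rule order_closure_in_lipschitz_image[where h = "\<lambda>x. f x c", OF S ES _ _ lip1])
      (use that ES fS fE subset_order_closure_in[of E S] in auto)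
  show ?thesis
    by (rule order_closure_in_lipschitz_image[where h = "\<lambda>x. f x y", OF S ES _ _ lip1])
      (use x y E_K comm KS fS in auto)
qed

lemma riesz_subspace_order_closure_in:
  assumes S: "riesz_subspace S" and E: "riesz_subspace E" and ES: "E \<subseteq> S"
  shows "riesz_subspace (order_closure_in S E)"
proof -
  let ?K = "order_closure_in S E"
  have "c *\<^sub>R x \<in> ?K" if "x \<in> ?K" for c x
    by (rule order_closure_in_lipschitz_image[OF S ES _ _ vabs_scaleR_diff_le])
      (use that E S ES subset_order_closure_in[of E S] in \<open>auto intro: riesz_subspace_scaleR\<close>)
  moreover have "x + y \<in> ?K" if "x \<in> ?K" "y \<in> ?K" for x y
    by (rule order_closure_in_closed_under_commutative[OF S ES])
      (use that S E in \<open>auto intro: riesz_subspace_add add.commute\<close>)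
  moreover have "sup x y \<in> ?K" if "x \<in> ?K" "y \<in> ?K" for x y
    by (rule order_closure_in_closed_under_commutative[OF S ES _ _ sup_commute vabs_sup_diff_le])
      (use that S E in \<open>auto intro: riesz_subspace_sup\<close>)
  moreover have "inf x y \<in> ?K" if "x \<in> ?K" "y \<in> ?K" for x y
    by (rule order_closure_in_closed_under_commutative[OF S ES _ _ inf_commute vabs_inf_diff_le])
      (use that S E in \<open>auto intro: riesz_subspace_inf\<close>)
  moreover have "0 \<in> ?K"
    using riesz_subspace_zero[OF E] subset_order_closure_in by blast
  ultimately show ?thesis
    by (simp add: riesz_subspace_def)
qed

section \<open>Suprema, completeness and regularity\<close>

lemma is_inf_in_diff_if_is_sup_in:
  fixes D :: "'a::{ordered_real_vector,lattice} set"
  assumes S: "riesz_subspace S" and s: "is_sup_in S D s"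
  shows "is_inf_in S ((\<lambda>d. s - d) ` D) 0"
  unfolding is_inf_in_def
proof (intro conjI ballI impI)
  show "0 \<in> S"
    using S by (rule riesz_subspace_zero)
  fix g
  assume "g \<in> (\<lambda>d. s - d) ` D"
  then show "0 \<le> g"
    using s by (auto simp: is_sup_in_def)
next
  fix z
  assume z: "z \<in> S" and lower: "\<forall>g\<in>(\<lambda>d. s - d) ` D. z \<le> g"
  have "s - z \<in> S"
    using S s z by (auto simp: is_sup_in_def intro: riesz_subspace_diff)
  moreover have "\<forall>d\<in>D. d \<le> s - z"
    using lower by (auto simp: le_diff_eq add.commute)
  ultimately have "s \<le> s - z"
    using s by (auto simp: is_sup_in_def)
  then show "z \<le> 0"
    by (simp add: le_diff_eq)
qed

text \<open>An upward directed set is a net, indexed by itself, along the filter of its tails.\<close>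

lemma eventually_directed_tails:
  fixes D :: "'a::order set"
  assumes D: "D \<noteq> {}" and directed: "\<And>a b. a \<in> D \<Longrightarrow> b \<in> D \<Longrightarrow> \<exists>c\<in>D. a \<le> c \<and> b \<le> c"
  shows "eventually P (INF d\<in>D. principal {x \<in> D. d \<le> x}) \<longleftrightarrow> (\<exists>d\<in>D. \<forall>x\<in>D. d \<le> x \<longrightarrow> P x)"
proof (subst eventually_INF_base)
  fix a b
  assume "a \<in> D" "b \<in> D"
  then obtain c where "c \<in> D" "a \<le> c" "b \<le> c"
    using directed by blast
  then show "\<exists>c\<in>D. principal {x \<in> D. c \<le> x} \<le>
      inf (principal {x \<in> D. a \<le> x}) (principal {x \<in> D. b \<le> x})"
    by (auto intro!: bexI[of _ c])
qed (use D in \<open>auto simp: eventually_principal\<close>)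

lemma order_closed_in_directed_sup:
  fixes D :: "'a::{ordered_real_vector,lattice} set"
  assumes S: "riesz_subspace S" and K: "order_closed_in S K"
    and DK: "D \<subseteq> K" and DS: "D \<subseteq> S" and D: "D \<noteq> {}"
    and directed: "\<And>a b. a \<in> D \<Longrightarrow> b \<in> D \<Longrightarrow> \<exists>c\<in>D. a \<le> c \<and> b \<le> c"
    and s: "is_sup_in S D s"
  shows "s \<in> K"
proof -
  define N where "N = (INF d\<in>D. principal {x \<in> D. d \<le> x})"
  have eventually_N: "eventually P N \<longleftrightarrow> (\<exists>d\<in>D. \<forall>x\<in>D. d \<le> x \<longrightarrow> P x)" for P
    unfolding N_def using D directed by (rule eventually_directed_tails)
  have "N \<noteq> bot"
    using D by (auto simp: eventually_False[symmetric] eventually_N)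
  moreover have "eventually (\<lambda>x. x \<in> K) N"
    using D DK by (auto simp: eventually_N)
  moreover have "order_conv_in S (\<lambda>x. x) N s"
    unfolding order_conv_in_def
  proof (intro conjI exI[of _ "(\<lambda>d. s - d) ` D"])
    show "s \<in> S"
      using s by (simp add: is_sup_in_def)
    then show "(\<lambda>d. s - d) ` D \<subseteq> S"
      using S DS by (auto intro: riesz_subspace_diff)
    show "is_inf_in S ((\<lambda>d. s - d) ` D) 0"
      using S s by (rule is_inf_in_diff_if_is_sup_in)
    show "\<forall>g\<in>(\<lambda>d. s - d) ` D. eventually (\<lambda>x. s - g \<le> x \<and> x \<le> s + g) N"
    proof
      fix g
      assume "g \<in> (\<lambda>d. s - d) ` D"
      then obtain d where d: "d \<in> D" "g = s - d"
        by blast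
      have "s - g \<le> x \<and> x \<le> s + g" if "x \<in> D" "d \<le> x" for x
        using that d s by (auto simp: is_sup_in_def intro: order_trans add_increasing2)
      then show "eventually (\<lambda>x. s - g \<le> x \<and> x \<le> s + g) N"
        using d(1) by (auto simp: eventually_N)
    qed
  qed
  ultimately show ?thesis
    using K by (blast intro: order_closed_inD)
qed

lemma order_closed_in_sup:
  fixes K :: "'a::{ordered_real_vector,lattice} set"
  assumes S: "riesz_subspace S" and K: "riesz_subspace K" "K \<subseteq> S" "order_closed_in S K"
    and A: "A \<subseteq> K" "A \<noteq> {}" and s: "is_sup_in S A s"
  shows "s \<in> K"
proof -
  define D where "D = {x \<in> K. (\<exists>a\<in>A. a \<le> x) \<and> x \<le> s}"
  have "A \<subseteq> D"
    using A s by (auto simp: D_def is_sup_in_def)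
  show ?thesis
  proof (rule order_closed_in_directed_sup[OF S K(3)])
    show "D \<subseteq> K" "D \<subseteq> S"
      using K(2) by (auto simp: D_def)
    show "D \<noteq> {}"
      using \<open>A \<subseteq> D\<close> A(2) by blast
    show "\<exists>c\<in>D. a \<le> c \<and> b \<le> c" if "a \<in> D" "b \<in> D" for a b
    proof -
      have "sup a b \<in> D"
        using that K(1) by (auto simp: D_def intro: riesz_subspace_sup le_supI1)
      then show ?thesis
        by (intro bexI[of _ "sup a b"]) simp_all
    qed
    have "s \<le> y" if "y \<in> S" "\<forall>d\<in>D. d \<le> y" for y
      using that s \<open>A \<subseteq> D\<close> unfolding is_sup_in_def by (meson subsetD)
    then show "is_sup_in S D s"
      using s by (auto simp: is_sup_in_def D_def)
  qed
qed

lemma is_inf_in_uminus_iff: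
  fixes A :: "'a::{ordered_real_vector,lattice} set"
  shows "is_inf_in UNIV (uminus ` A) w \<longleftrightarrow> is_sup_in UNIV A (- w)"
  unfolding is_inf_in_def is_sup_in_def
  by (auto simp: minus_le_iff le_minus_iff) (metis minus_minus le_minus_iff)

lemma order_complete_on_UNIV_sup:
  fixes A :: "'a::{ordered_real_vector,lattice} set"
  assumes "order_complete_on (UNIV :: 'a set)" and "A \<noteq> {}" "\<forall>a\<in>A. a \<le> u"
  shows "\<exists>s. is_sup_in UNIV A s"
  using assms(1)[unfolded order_complete_on_def, rule_format, of A] assms(2,3) by blast

lemma order_complete_on_UNIV_inf:
  fixes A :: "'a::{ordered_real_vector,lattice} set"
  assumes complete: "order_complete_on (UNIV :: 'a set)" and "A \<noteq> {}" "\<forall>a\<in>A. l \<le> a"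
  shows "\<exists>w. is_inf_in UNIV A w"
proof -
  obtain s where "is_sup_in UNIV (uminus ` A) s"
    using order_complete_on_UNIV_sup[OF complete, of "uminus ` A" "- l"] assms(2,3) by auto
  then have "is_inf_in UNIV (uminus ` uminus ` A) (- s)"
    by (simp add: is_inf_in_uminus_iff)
  then show ?thesis
    by (auto simp: image_image)
qed

lemma archimedean_on_UNIV_if_order_complete:
  assumes complete: "order_complete_on (UNIV :: 'a::{ordered_real_vector,lattice} set)"
  shows "archimedean_on (UNIV :: 'a set)"
  unfolding archimedean_on_def
proof (intro ballI impI)
  fix x y :: 'a
  assume "0 \<le> x \<and> (\<forall>n. real n *\<^sub>R x \<le> y)"
  then have x: "0 \<le> x" and bounded: "\<forall>n. real n *\<^sub>R x \<le> y"
    by auto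
  obtain s where s: "is_sup_in UNIV (range (\<lambda>n. real n *\<^sub>R x)) s"
    using order_complete_on_UNIV_sup[OF complete, of "range (\<lambda>n. real n *\<^sub>R x)" y] bounded
    by auto
  have "real n *\<^sub>R x \<le> s - x" for n
  proof -
    have "real (Suc n) *\<^sub>R x \<le> s"
      using s rangeI[of "\<lambda>n. real n *\<^sub>R x" "Suc n"] unfolding is_sup_in_def by blast
    then show ?thesis
      by (simp add: algebra_simps le_diff_eq)
  qed
  then have "s \<le> s - x"
    using s by (auto simp: is_sup_in_def)
  with x show "x = 0"
    by (simp add: le_diff_eq)
qed

lemma order_complete_on_if_order_closed:
  fixes K :: "'a::{ordered_real_vector,lattice} set"
  assumes complete: "order_complete_on (UNIV :: 'a set)"
    and K: "riesz_subspace K" and closed: "order_closed_in UNIV K"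
  shows "order_complete_on K"
  unfolding order_complete_on_def
proof (intro allI impI)
  fix A
  assume A: "A \<subseteq> K" "A \<noteq> {} \<and> (\<exists>u\<in>K. \<forall>a\<in>A. a \<le> u)"
  then obtain s where s: "is_sup_in UNIV A s"
    using order_complete_on_UNIV_sup[OF complete] by blast
  moreover have "s \<in> K"
    using order_closed_in_sup[OF riesz_subspace_UNIV K subset_UNIV closed] A s by blast
  ultimately have "is_sup_in K A s"
    by (simp add: is_sup_in_def)
  then show "\<exists>s. is_sup_in K A s" ..
qed

lemma universally_complete_if_order_closed:
  fixes K :: "'a::{ordered_real_vector,lattice} set"
  assumes U: "universally_complete (UNIV :: 'a set)"
    and K: "riesz_subspace K" and closed: "order_closed_in UNIV K"
  shows "universally_complete K"
proof -
  have complete: "order_complete_on (UNIV :: 'a set)"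
    using U by (simp add: universally_complete_def)
  note sup_in_K = order_closed_in_sup[OF riesz_subspace_UNIV K subset_UNIV closed]
  have "order_bounded_in K D" if D: "D \<subseteq> K" "pairwise_disjoint D" for D
  proof (cases "D = {}")
    case True
    then show ?thesis
      using riesz_subspace_zero[OF K] by (auto simp: order_bounded_in_def)
  next
    case False
    have "order_bounded_in UNIV D"
      using U D by (simp add: universally_complete_def)
    then obtain a b where ab: "\<forall>x\<in>D. a \<le> x \<and> x \<le> b"
      by (auto simp: order_bounded_in_def)
    obtain s where s: "is_sup_in UNIV D s"
      using order_complete_on_UNIV_sup[OF complete False] ab by blast
    obtain t where t: "is_sup_in UNIV (uminus ` D) t"
      using order_complete_on_UNIV_sup[OF complete, of "uminus ` D" "- a"] False ab by auto
    have "s \<in> K"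
      using D(1) False s by (rule sup_in_K)
    moreover have "uminus ` D \<subseteq> K"
      using D(1) K by (auto intro: riesz_subspace_uminus)
    then have "- t \<in> K"
      using sup_in_K[OF _ _ t] False K by (blast intro: riesz_subspace_uminus)
    moreover have "- t \<le> x \<and> x \<le> s" if "x \<in> D" for x
      using s t that unfolding is_sup_in_def by (auto simp: minus_le_iff)
    ultimately show ?thesis
      unfolding order_bounded_in_def by blast
  qed
  then show ?thesis
    using K order_complete_on_if_order_closed[OF complete K closed]
    by (simp add: universally_complete_def)
qed

lemma regular_in_if_order_dense:
  fixes F H :: "'a::{ordered_real_vector,lattice} set"
  assumes H: "riesz_subspace H" and dense: "order_dense_in H F"
  shows "regular_in H F"
  unfolding regular_in_def
proof (intro allI impI)
  fix G
  assume "G \<subseteq> F" and G: "is_inf_in F G 0"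
  show "is_inf_in H G 0"
    unfolding is_inf_in_def
  proof (intro conjI ballI impI)
    show "0 \<in> H"
      using H by (rule riesz_subspace_zero)
    fix g
    assume "g \<in> G"
    then show "0 \<le> g"
      using G by (auto simp: is_inf_in_def)
  next
    fix y
    assume "y \<in> H" and lower: "\<forall>g\<in>G. y \<le> g"
    have "sup y 0 = 0"
    proof (rule ccontr)
      assume "sup y 0 \<noteq> 0"
      then have "0 < sup y 0"
        by (simp add: order_less_le)
      moreover have "sup y 0 \<in> H"
        using H \<open>y \<in> H\<close> by (intro riesz_subspace_sup riesz_subspace_zero)
      ultimately obtain f where f: "f \<in> F" "0 < f" "f \<le> sup y 0"
        using dense by (auto simp: order_dense_in_def)
      have "f \<le> g" if "g \<in> G" for g
        using f(3) lower G that by (auto simp: is_inf_in_def intro: order_trans)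
      then have "f \<le> 0"
        using G f(1) by (auto simp: is_inf_in_def)
      with f(2) show False
        by simp
    qed
    then show "y \<le> 0"
      by (metis sup_ge1)
  qed
qed

lemma regular_in_trans: "E \<subseteq> F \<Longrightarrow> regular_in H F \<Longrightarrow> regular_in F E \<Longrightarrow> regular_in H E"
  unfolding regular_in_def by blast

lemma order_closure_in_subset_Int:
  assumes ST: "S \<subseteq> T" and regular: "regular_in T S" and ES: "E \<subseteq> S"
  shows "order_closure_in S E \<subseteq> order_closure_in T E \<inter> S"
proof (rule order_closure_in_minimal)
  show "order_closure_in T E \<inter> S \<subseteq> S"
    by blast
  show "E \<subseteq> order_closure_in T E \<inter> S"
    using ES subset_order_closure_in by blast
  show "order_closed_in S (order_closure_in T E \<inter> S)"
    unfolding order_closed_in_def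
  proof (intro allI impI)
    fix N :: "'a filter" and f
    assume N: "N \<noteq> bot \<and> eventually (\<lambda>x. x \<in> order_closure_in T E \<inter> S) N
      \<and> order_conv_in S (\<lambda>x. x) N f"
    then obtain G where "f \<in> S" "G \<subseteq> S" "is_inf_in S G 0"
      and ev: "\<forall>g\<in>G. eventually (\<lambda>x. f - g \<le> x \<and> x \<le> f + g) N"
      by (auto simp: order_conv_in_def)
    then have "order_conv_in T (\<lambda>x. x) N f"
      using ST regular unfolding order_conv_in_def regular_in_def by blast
    moreover have "eventually (\<lambda>x. x \<in> order_closure_in T E) N"
      using N by (auto elim: eventually_mono)
    ultimately have "f \<in> order_closure_in T E"
      using N order_closed_inD[OF order_closed_order_closure_in] by blast
    with \<open>f \<in> S\<close> show "f \<in> order_closure_in T E \<inter> S"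
      by blast
  qed
qed

lemma is_inf_in_le_order_limit:
  fixes M :: "'a::{ordered_real_vector,lattice} filter"
  assumes M: "M \<noteq> bot" and P: "eventually (\<lambda>x. x \<in> P) M" and w: "is_inf_in UNIV P w"
    and conv: "order_conv_in UNIV (\<lambda>x. x) M y"
  shows "w \<le> y"
proof -
  obtain G where G: "is_inf_in UNIV G 0"
    and ev: "\<forall>g\<in>G. eventually (\<lambda>x. y - g \<le> x \<and> x \<le> y + g) M"
    using conv by (auto simp: order_conv_in_def)
  have "w - y \<le> g" if "g \<in> G" for g
  proof -
    have "eventually (\<lambda>x. x \<in> P \<and> x \<le> y + g) M"
      using P ev that by (auto elim: eventually_elim2)
    then obtain x where "x \<in> P" "x \<le> y + g"
      using eventually_happens'[OF M] by blast
    then have "w \<le> y + g"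
      using w by (auto simp: is_inf_in_def intro: order_trans)
    then show ?thesis
      by (simp add: diff_le_eq add.commute)
  qed
  then have "w - y \<le> 0"
    using G unfolding is_inf_in_def by blast
  then show ?thesis
    by simp
qed

lemma is_sup_in_tail_infs:
  fixes M :: "'a::{ordered_real_vector,lattice} filter"
  assumes complete: "order_complete_on (UNIV :: 'a set)"
    and M: "M \<noteq> bot" and T: "eventually (\<lambda>x. x \<in> T) M" and lower: "\<forall>x\<in>T. l \<le> x"
    and conv: "order_conv_in UNIV (\<lambda>x. x) M y"
  shows "is_sup_in UNIV {w. \<exists>P\<subseteq>T. eventually (\<lambda>x. x \<in> P) M \<and> is_inf_in UNIV P w} y"
proof -
  define Q where "Q = {w. \<exists>P\<subseteq>T. eventually (\<lambda>x. x \<in> P) M \<and> is_inf_in UNIV P w}"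
  obtain G where G: "is_inf_in UNIV G 0"
    and ev: "\<forall>g\<in>G. eventually (\<lambda>x. y - g \<le> x \<and> x \<le> y + g) M"
    using conv by (auto simp: order_conv_in_def)
  have "y \<le> v" if upper: "\<forall>w\<in>Q. w \<le> v" for v
  proof -
    have "y - v \<le> g" if "g \<in> G" for g
    proof -
      define P where "P = {x \<in> T. y - g \<le> x}"
      have evP: "eventually (\<lambda>x. x \<in> P) M"
        using T ev that by (auto simp: P_def elim: eventually_elim2)
      then have "P \<noteq> {}"
        using eventually_happens'[OF M] by blast
      moreover have "\<forall>x\<in>P. l \<le> x"
        using lower by (simp add: P_def)
      ultimately obtain w where w: "is_inf_in UNIV P w"
        using order_complete_on_UNIV_inf[OF complete] by blast
      have "P \<subseteq> T"
        by (auto simp: P_def)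
      with evP w have "w \<le> v"
        using upper unfolding Q_def by blast
      moreover have "y - g \<le> w"
        using w by (auto simp: is_inf_in_def P_def)
      ultimately have "y - g \<le> v"
        by (rule order_trans[rotated])
      then show ?thesis
        by (metis diff_le_eq add.commute)
    qed
    then have "y - v \<le> 0"
      using G unfolding is_inf_in_def by blast
    then show "y \<le> v"
      by simp
  qed
  moreover have "w \<le> y" if "w \<in> Q" for w
    using that M conv is_inf_in_le_order_limit by (auto simp: Q_def)
  ultimately show ?thesis
    by (auto simp: is_sup_in_def Q_def)
qed

section \<open>Disjoint complements and elements squeezed by a sublattice\<close>

definition disjoint_complement :: "'a::{ordered_real_vector,lattice} set \<Rightarrow> 'a set" where
  "disjoint_complement A = {u. \<forall>a\<in>A. inf (vabs u) (vabs a) = 0}"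

lemma subset_disjoint_complement_disjoint_complement:
  "A \<subseteq> disjoint_complement (disjoint_complement A)"
  by (auto simp: disjoint_complement_def inf_commute)

lemma order_closed_disjoint_complement: "order_closed_in UNIV (disjoint_complement A)"
  unfolding order_closed_in_def
proof (intro allI impI)
  fix N :: "'a filter" and y
  assume N: "N \<noteq> bot \<and> eventually (\<lambda>x. x \<in> disjoint_complement A) N
    \<and> order_conv_in UNIV (\<lambda>x. x) N y"
  then obtain G where G: "is_inf_in UNIV G 0"
    and ev: "\<forall>g\<in>G. eventually (\<lambda>x. vabs (x - y) \<le> g) N"
    by (auto simp: order_conv_in_iff_vabs)
  have "inf (vabs y) (vabs a) = 0" if "a \<in> A" for a
  proof -
    have "inf (vabs y) (vabs a) \<le> g" if "g \<in> G" for g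
    proof -
      have "eventually (\<lambda>x. x \<in> disjoint_complement A \<and> vabs (x - y) \<le> g) N"
        using N ev \<open>g \<in> G\<close> by (auto elim: eventually_elim2)
      then obtain x where x: "x \<in> disjoint_complement A" "vabs (x - y) \<le> g"
        using eventually_happens' N by blast
      have "vabs y \<le> vabs x + vabs (y - x)"
        using vector_lattice.abs_triangle_ineq[of x "y - x"] by simp
      then have "inf (vabs y) (vabs a) \<le> inf (vabs x + vabs (y - x)) (vabs a)"
        by (rule inf_mono) simp
      also have "\<dots> \<le> inf (vabs x) (vabs a) + inf (vabs (y - x)) (vabs a)"
        by (rule inf_add_le_add_inf) simp_all
      also have "\<dots> \<le> vabs (x - y)"
        using x(1) \<open>a \<in> A\<close> by (simp add: disjoint_complement_def vector_lattice.abs_minus_commute)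
      finally show ?thesis
        using x(2) by order
    qed
    then have "inf (vabs y) (vabs a) \<le> 0"
      using G by (simp add: is_inf_in_def)
    then show ?thesis
      by (simp add: antisym)
  qed
  then show "y \<in> disjoint_complement A"
    by (simp add: disjoint_complement_def)
qed

lemma order_closure_in_subset_band:
  "order_closure_in UNIV E \<subseteq> disjoint_complement (disjoint_complement E)"
  by (rule order_closure_in_minimal)
    (simp_all add: subset_disjoint_complement_disjoint_complement order_closed_disjoint_complement)

lemma diff_inf_in_disjoint_complement:
  fixes y v :: "'a::{ordered_real_vector,lattice}"
  assumes arch: "archimedean_on (UNIV :: 'a set)" and E: "riesz_subspace E" and y: "0 \<le> y"
    and le_v: "\<And>e. e \<in> E \<Longrightarrow> 0 \<le> e \<Longrightarrow> inf y e \<le> v"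
  shows "y - inf y v \<in> disjoint_complement E"
proof -
  define r where "r = y - inf y v"
  have r: "0 \<le> r"
    unfolding r_def by (metis diff_ge_0_iff_ge inf_le1)
  have "inf r (vabs e) = 0" if "e \<in> E" for e
  proof -
    define q where "q = inf r (vabs e)"
    have q: "0 \<le> q"
      using r by (simp add: q_def)
    \<comment> \<open>\<open>r \<le> (y - n |e|) \<squnion> 0\<close> for every \<open>n\<close>, which forces \<open>n q \<le> y\<close>.\<close>
    have "real n *\<^sub>R q \<le> y" for n
    proof (rule scaleR_le_if_le_pos_part[OF q y])
      define m where "m = real n *\<^sub>R vabs e"
      have "m \<in> E" "0 \<le> m"
        using E \<open>e \<in> E\<close>
        by (simp_all add: m_def riesz_subspace_scaleR riesz_subspace_vabs scaleR_nonneg_nonneg)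
      then have "inf y m \<le> v"
        by (rule le_v)
      have "q \<le> r"
        by (simp add: q_def)
      also have "r \<le> y - inf y m"
        unfolding r_def using \<open>inf y m \<le> v\<close> by (intro diff_left_mono) simp
      also have "\<dots> = sup (y - m) 0"
        by (simp add: vector_lattice.add_sup_distrib_left sup_commute)
      also have "\<dots> \<le> sup (y - real n *\<^sub>R q) 0"
        unfolding m_def by (intro sup_mono diff_left_mono scaleR_left_mono) (simp_all add: q_def)
      finally show "q \<le> sup (y - real n *\<^sub>R q) 0" .
    qed
    then have "q = 0"
      using arch q unfolding archimedean_on_def by blast
    then show "inf r (vabs e) = 0"
      by (simp add: q_def)
  qed
  then show ?thesis
    unfolding r_def[symmetric] disjoint_complement_def using r by simp
qed

definition enclosure_gaps :: "'a::{ordered_real_vector,lattice} set \<Rightarrow> 'a \<Rightarrow> 'a set" where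
  "enclosure_gaps E w = {b - a |a b. a \<in> E \<and> b \<in> E \<and> a \<le> w \<and> w \<le> b}"

definition squeezed_by :: "'a::{ordered_real_vector,lattice} set \<Rightarrow> 'a \<Rightarrow> bool" where
  "squeezed_by E w \<longleftrightarrow> enclosure_gaps E w \<noteq> {} \<and> is_inf_in UNIV (enclosure_gaps E w) 0"

lemma squeezed_by_mem:
  assumes "x \<in> E"
  shows "squeezed_by E x"
proof -
  have "0 \<in> enclosure_gaps E x"
    using assms unfolding enclosure_gaps_def by force
  moreover have "is_inf_in UNIV (enclosure_gaps E x) 0"
    using \<open>0 \<in> enclosure_gaps E x\<close> by (auto simp: is_inf_in_def enclosure_gaps_def)
  ultimately show ?thesis
    by (auto simp: squeezed_by_def)
qed

lemma squeezed_by_inf_majorants: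
  assumes "squeezed_by E w"
  shows "is_inf_in UNIV {b \<in> E. w \<le> b} w"
  unfolding is_inf_in_def
proof (intro conjI ballI allI impI)
  fix z
  assume z: "\<forall>b\<in>{b \<in> E. w \<le> b}. z \<le> b"
  have "z - w \<le> d" if "d \<in> enclosure_gaps E w" for d
    using that z by (auto simp: enclosure_gaps_def intro: diff_mono)
  then have "z - w \<le> 0"
    using assms unfolding squeezed_by_def is_inf_in_def by blast
  then show "z \<le> w"
    by simp
qed simp_all

lemma squeezed_by_sup_minorants:
  assumes "squeezed_by E w"
  shows "is_sup_in UNIV {a \<in> E. a \<le> w} w"
  unfolding is_sup_in_def
proof (intro conjI ballI allI impI)
  fix v
  assume v: "\<forall>a\<in>{a \<in> E. a \<le> w}. a \<le> v"
  have "w - v \<le> d" if "d \<in> enclosure_gaps E w" for d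
    using that v by (auto simp: enclosure_gaps_def intro: diff_mono)
  then have "w - v \<le> 0"
    using assms unfolding squeezed_by_def is_inf_in_def by blast
  then show "w \<le> v"
    by simp
qed simp_all

lemma squeezed_by_uminus:
  assumes E: "riesz_subspace E"
  shows "squeezed_by E (- w) \<longleftrightarrow> squeezed_by E w"
proof -
  have gaps: "enclosure_gaps E (- x) \<subseteq> enclosure_gaps E x" for x
  proof
    fix d
    assume "d \<in> enclosure_gaps E (- x)"
    then obtain a b where d: "d = b - a" "a \<in> E" "b \<in> E" "a \<le> - x" "- x \<le> b"
      by (auto simp: enclosure_gaps_def)
    then have "d = (- a) - (- b)" "- b \<in> E" "- a \<in> E" "- b \<le> x" "x \<le> - a"
      using E by (simp_all add: riesz_subspace_uminus minus_le_iff le_minus_iff)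
    then show "d \<in> enclosure_gaps E x"
      unfolding enclosure_gaps_def by blast
  qed
  have "enclosure_gaps E (- w) = enclosure_gaps E w"
    using gaps[of w] gaps[of "- w"] by simp
  then show ?thesis
    by (simp add: squeezed_by_def)
qed

section \<open>The order closure of a regular Riesz subspace\<close>

locale regular_riesz_subspace =
  fixes E :: "'a::{ordered_real_vector,lattice} set"
  assumes order_complete: "order_complete_on (UNIV :: 'a set)"
    and riesz: "riesz_subspace E"
    and regular: "regular_in UNIV E"
begin

lemma archimedean: "archimedean_on (UNIV :: 'a set)"
  using order_complete by (rule archimedean_on_UNIV_if_order_complete)

lemma enclosure_gap_minorant_eq_0:
  assumes a0: "a0 \<in> E" "a0 \<le> w" and inf: "is_inf_in UNIV {b \<in> E. w \<le> b} w"
    and p: "p \<in> E" "0 \<le> p" and below: "\<forall>d\<in>enclosure_gaps E w. p \<le> d"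
  shows "p = 0"
proof -
  \<comment> \<open>\<open>p\<close> can be added to every minorant of \<open>w\<close> in \<open>E\<close>, so \<open>a0 + n p \<le> w\<close> for all \<open>n\<close>.\<close>
  have step: "a + p \<le> w" if "a \<in> E" "a \<le> w" for a
  proof -
    have "a + p \<le> b" if "b \<in> E" "w \<le> b" for b
    proof -
      have "b - a \<in> enclosure_gaps E w"
        using \<open>a \<in> E\<close> \<open>a \<le> w\<close> that by (auto simp: enclosure_gaps_def)
      then have "p \<le> b - a"
        using below by blast
      then show ?thesis
        by (simp add: le_diff_eq add.commute)
    qed
    then show ?thesis
      using inf by (simp add: is_inf_in_def)
  qed
  have "a0 + real n *\<^sub>R p \<in> E \<and> a0 + real n *\<^sub>R p \<le> w" for n
  proof (induction n)
    case 0
    then show ?case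
      using a0 by simp
  next
    case (Suc n)
    then have "a0 + real n *\<^sub>R p + p \<in> E \<and> a0 + real n *\<^sub>R p + p \<le> w"
      using step p riesz by (auto intro: riesz_subspace_add)
    then show ?case
      by (simp add: algebra_simps)
  qed
  then have "\<forall>n. real n *\<^sub>R p \<le> w - a0"
    by (simp add: le_diff_eq add.commute)
  then show "p = 0"
    using archimedean p(2) unfolding archimedean_on_def by blast
qed

lemma squeezed_by_if_inf_majorants:
  assumes a0: "a0 \<in> E" "a0 \<le> w" and b0: "b0 \<in> E" "w \<le> b0"
    and inf: "is_inf_in UNIV {b \<in> E. w \<le> b} w"
  shows "squeezed_by E w"
proof -
  have "is_inf_in E (enclosure_gaps E w) 0"
    unfolding is_inf_in_def
  proof (intro conjI ballI impI)
    show "0 \<in> E"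
      using riesz by (rule riesz_subspace_zero)
    fix d
    assume "d \<in> enclosure_gaps E w"
    then show "0 \<le> d"
      by (auto simp: enclosure_gaps_def)
  next
    fix z
    assume "z \<in> E" and lower: "\<forall>d\<in>enclosure_gaps E w. z \<le> d"
    have "sup z 0 = 0"
      using a0 inf by (rule enclosure_gap_minorant_eq_0)
        (use riesz \<open>z \<in> E\<close> lower in
          \<open>auto simp: enclosure_gaps_def intro: riesz_subspace_sup riesz_subspace_zero\<close>)
    then show "z \<le> 0"
      by (metis sup_ge1)
  qed
  moreover have "enclosure_gaps E w \<subseteq> E"
    using riesz by (auto simp: enclosure_gaps_def intro: riesz_subspace_diff)
  ultimately have "is_inf_in UNIV (enclosure_gaps E w) 0"
    using regular by (simp add: regular_in_def)
  moreover have "b0 - a0 \<in> enclosure_gaps E w"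
    using a0 b0 by (auto simp: enclosure_gaps_def)
  ultimately show ?thesis
    by (auto simp: squeezed_by_def)
qed

lemma squeezed_by_Inf:
  assumes P: "P \<noteq> {}" "\<forall>x\<in>P. squeezed_by E x"
    and a0: "a0 \<in> E" "\<forall>x\<in>P. a0 \<le> x" and w: "is_inf_in UNIV P w"
  shows "squeezed_by E w"
proof -
  obtain x0 where "x0 \<in> P"
    using P by blast
  then obtain b0 where b0: "b0 \<in> E" "x0 \<le> b0"
    using P(2) by (auto simp: squeezed_by_def enclosure_gaps_def)
  show ?thesis
  proof (rule squeezed_by_if_inf_majorants[OF a0(1) _ b0(1)])
    show "a0 \<le> w"
      using w a0 by (simp add: is_inf_in_def)
    show "w \<le> b0"
      using w \<open>x0 \<in> P\<close> b0(2) by (auto simp: is_inf_in_def intro: order_trans)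
    show "is_inf_in UNIV {b \<in> E. w \<le> b} w"
      unfolding is_inf_in_def
    proof (intro conjI ballI allI impI)
      fix z
      assume z: "\<forall>b\<in>{b \<in> E. w \<le> b}. z \<le> b"
      have "z \<le> x" if "x \<in> P" for x
      proof -
        have "is_inf_in UNIV {b \<in> E. x \<le> b} x"
          using P(2) that by (simp add: squeezed_by_inf_majorants)
        moreover have "\<forall>b\<in>{b \<in> E. x \<le> b}. z \<le> b"
          using z w that by (auto simp: is_inf_in_def intro: order_trans)
        ultimately show ?thesis
          by (simp add: is_inf_in_def)
      qed
      then show "z \<le> w"
        using w by (simp add: is_inf_in_def)
    qed simp_all
  qed
qed

lemma squeezed_by_Sup:
  assumes Q: "Q \<noteq> {}" "\<forall>x\<in>Q. squeezed_by E x"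
    and b0: "b0 \<in> E" "\<forall>x\<in>Q. x \<le> b0" and s: "is_sup_in UNIV Q s"
  shows "squeezed_by E s"
proof -
  have "squeezed_by E (- s)"
  proof (rule squeezed_by_Inf[of "uminus ` Q" "- b0"])
    show "uminus ` Q \<noteq> {}" "- b0 \<in> E" "\<forall>x\<in>uminus ` Q. - b0 \<le> x"
      using Q(1) b0 riesz by (auto intro: riesz_subspace_uminus)
    show "\<forall>x\<in>uminus ` Q. squeezed_by E x"
      using Q(2) squeezed_by_uminus[OF riesz] by auto
    show "is_inf_in UNIV (uminus ` Q) (- s)"
      using s by (simp add: is_inf_in_uminus_iff)
  qed
  then show ?thesis
    using squeezed_by_uminus[OF riesz] by simp
qed

lemma squeezed_by_interval_Inf:
  assumes P: "P \<noteq> {}" "P \<subseteq> {x. squeezed_by E x \<and> 0 \<le> x \<and> x \<le> e}"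
    and w: "is_inf_in UNIV P w"
  shows "squeezed_by E w \<and> 0 \<le> w \<and> w \<le> e"
proof -
  obtain x where "x \<in> P"
    using P(1) by blast
  have "squeezed_by E w"
    by (rule squeezed_by_Inf[of P 0]) (use P w riesz_subspace_zero[OF riesz] in auto)
  moreover have "0 \<le> w"
    using P w by (auto simp: is_inf_in_def)
  moreover have "w \<le> x" "x \<le> e"
    using P w \<open>x \<in> P\<close> by (auto simp: is_inf_in_def)
  then have "w \<le> e"
    by (rule order_trans)
  ultimately show ?thesis
    by simp
qed

lemma order_closed_squeezed_by_interval:
  assumes "e \<in> E"
  shows "order_closed_in UNIV {x. squeezed_by E x \<and> 0 \<le> x \<and> x \<le> e}"
proof -
  define T where "T = {x. squeezed_by E x \<and> 0 \<le> x \<and> x \<le> e}"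
  have "y \<in> T" if M: "M \<noteq> bot" and evT: "eventually (\<lambda>x. x \<in> T) M"
    and conv: "order_conv_in UNIV (\<lambda>x. x) M y" for M :: "'a filter" and y
  proof -
    define Q where "Q = {w. \<exists>P\<subseteq>T. eventually (\<lambda>x. x \<in> P) M \<and> is_inf_in UNIV P w}"
    have sup: "is_sup_in UNIV Q y"
      unfolding Q_def
      by (rule is_sup_in_tail_infs[where l = 0, OF order_complete M evT _ conv]) (simp add: T_def)
    have Q_T: "w \<in> T" if "w \<in> Q" for w
    proof -
      obtain P where P: "P \<subseteq> T" "eventually (\<lambda>x. x \<in> P) M" "is_inf_in UNIV P w"
        using \<open>w \<in> Q\<close> by (auto simp: Q_def)
      have "P \<noteq> {}"
        using eventually_happens'[OF M P(2)] by blast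
      then show ?thesis
        using squeezed_by_interval_Inf[OF _ P(1)[unfolded T_def] P(3)] by (simp add: T_def)
    qed
    have "T \<noteq> {}"
      using eventually_happens'[OF M evT] by blast
    moreover have "\<forall>x\<in>T. 0 \<le> x"
      by (simp add: T_def)
    ultimately obtain w0 where "is_inf_in UNIV T w0"
      using order_complete_on_UNIV_inf[OF order_complete] by blast
    then have "w0 \<in> Q"
      unfolding Q_def using evT by blast
    then have "Q \<noteq> {}"
      by blast
    have "0 \<le> w0" "w0 \<le> y"
      using Q_T[OF \<open>w0 \<in> Q\<close>] sup \<open>w0 \<in> Q\<close> by (simp_all add: T_def is_sup_in_def)
    then have "0 \<le> y"
      by (rule order_trans)
    moreover have "squeezed_by E y"
      by (rule squeezed_by_Sup[OF \<open>Q \<noteq> {}\<close> _ \<open>e \<in> E\<close> _ sup]) (use Q_T in \<open>auto simp: T_def\<close>)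
    moreover have "\<forall>w\<in>Q. w \<le> e"
      using Q_T by (simp add: T_def)
    then have "y \<le> e"
      using sup by (simp add: is_sup_in_def)
    ultimately show ?thesis
      by (simp add: T_def)
  qed
  then show ?thesis
    unfolding order_closed_in_def T_def[symmetric] by blast
qed

lemma squeezed_by_truncation:
  assumes y: "y \<in> order_closure_in UNIV E" and e: "e \<in> E" "0 \<le> e"
  shows "squeezed_by E (inf (sup y 0) e)"
proof -
  define T where "T = {x. squeezed_by E x \<and> 0 \<le> x \<and> x \<le> e}"
  define h where "h x = inf (sup x 0) e" for x
  have "order_closure_in UNIV E \<subseteq> {x \<in> UNIV. h x \<in> T}"
  proof (rule order_closure_in_minimal)
    show "E \<subseteq> {x \<in> UNIV. h x \<in> T}"
      using riesz e by (auto simp: T_def h_def intro!: squeezed_by_mem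
          riesz_subspace_inf riesz_subspace_sup riesz_subspace_zero)
    have lip: "vabs (h x - h x') \<le> 1 *\<^sub>R vabs (x - x')" for x x'
    proof -
      have "vabs (h x - h x') \<le> vabs (sup x 0 - sup x' 0)"
        unfolding h_def by (rule vabs_inf_diff_le)
      also have "\<dots> \<le> vabs (x - x')"
        by (rule vabs_sup_diff_le)
      finally show ?thesis
        by simp
    qed
    show "order_closed_in UNIV {x \<in> UNIV. h x \<in> T}"
      unfolding T_def using e(1)
      by (intro order_closed_in_vimage[OF riesz_subspace_UNIV _ _ lip]
          order_closed_squeezed_by_interval) simp_all
  qed simp
  with y show ?thesis
    by (auto simp: T_def h_def)
qed

lemma inf_le_majorant_of_minorants:
  assumes y: "y \<in> order_closure_in UNIV E" "0 \<le> y"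
    and v: "\<forall>e\<in>{e \<in> E. 0 \<le> e \<and> e \<le> y}. e \<le> v" and e: "e \<in> E" "0 \<le> e"
  shows "inf y e \<le> v"
proof -
  have "squeezed_by E (inf y e)"
    using squeezed_by_truncation[OF y(1) e] y(2) by (simp add: sup_absorb1)
  then have sup: "is_sup_in UNIV {a \<in> E. a \<le> inf y e} (inf y e)"
    by (rule squeezed_by_sup_minorants)
  have "a \<le> v" if "a \<in> E" "a \<le> inf y e" for a
  proof -
    have "sup a 0 \<in> {e \<in> E. 0 \<le> e \<and> e \<le> y}"
      using that riesz y(2) by (auto intro: riesz_subspace_sup riesz_subspace_zero)
    then show "a \<le> v"
      using v by (meson sup_ge1 order_trans)
  qed
  then show ?thesis
    using sup by (simp add: is_sup_in_def)
qed

lemma is_sup_in_minorants: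
  assumes y: "y \<in> order_closure_in UNIV E" "0 \<le> y"
  shows "is_sup_in UNIV {e \<in> E. 0 \<le> e \<and> e \<le> y} y"
proof -
  have "y \<le> v" if v: "\<forall>e\<in>{e \<in> E. 0 \<le> e \<and> e \<le> y}. e \<le> v" for v
  proof -
    note inf_le_v = inf_le_majorant_of_minorants[OF y v]
    define r where "r = y - inf y v"
    have "r \<in> disjoint_complement E"
      unfolding r_def using archimedean riesz y(2) inf_le_v
      by (rule diff_inf_in_disjoint_complement)
    moreover have "y \<in> disjoint_complement (disjoint_complement E)"
      using y(1) order_closure_in_subset_band by blast
    ultimately have "inf (vabs y) (vabs r) = 0"
      by (simp add: disjoint_complement_def)
    moreover have "0 \<le> v"
      using v riesz_subspace_zero[OF riesz] y(2) by auto
    then have "0 \<le> inf y v"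
      using y(2) by simp
    then have "0 \<le> r" "r \<le> y"
      unfolding r_def by (metis diff_ge_0_iff_ge inf_le1, metis diff_le_eq le_add_same_cancel1)
    ultimately have "r = 0"
      by (simp add: inf_absorb2)
    then have "y = inf y v"
      unfolding r_def by (simp only: right_minus_eq)
    then show "y \<le> v"
      by (metis inf.cobounded2)
  qed
  then show ?thesis
    by (auto simp: is_sup_in_def)
qed

lemma order_dense_in_order_closure: "order_dense_in (order_closure_in UNIV E) E"
  unfolding order_dense_in_def
proof (intro ballI impI)
  fix h
  assume h: "h \<in> order_closure_in UNIV E" "0 < h"
  show "\<exists>e\<in>E. 0 < e \<and> e \<le> h"
  proof (rule ccontr)
    assume "\<not> (\<exists>e\<in>E. 0 < e \<and> e \<le> h)"
    then have "\<forall>e\<in>{e \<in> E. 0 \<le> e \<and> e \<le> h}. e \<le> 0"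
      by (auto simp: order_less_le)
    then have "h \<le> 0"
      using is_sup_in_minorants[OF h(1) less_imp_le[OF h(2)]] by (simp add: is_sup_in_def)
    with h(2) show False
      by simp
  qed
qed

lemma nonneg_mem_order_closure_in:
  assumes F: "riesz_subspace F" and EF: "E \<subseteq> F"
    and y: "y \<in> order_closure_in UNIV E" "y \<in> F" "0 \<le> y"
  shows "y \<in> order_closure_in F E"
proof -
  let ?L = "{e \<in> E. 0 \<le> e \<and> e \<le> y}"
  have "is_sup_in F ?L y"
    using is_sup_in_minorants[OF y(1,3)] y(2) by (simp add: is_sup_in_def)
  then show ?thesis
  proof (rule order_closed_in_directed_sup[OF F order_closed_order_closure_in, rotated -1])
    show "?L \<subseteq> order_closure_in F E" "?L \<subseteq> F"
      using EF subset_order_closure_in[of E F] by blast+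
    show "?L \<noteq> {}"
      using riesz_subspace_zero[OF riesz] y(3) by blast
    show "\<exists>c\<in>?L. a \<le> c \<and> b \<le> c" if "a \<in> ?L" "b \<in> ?L" for a b
    proof -
      have "sup a b \<in> ?L"
        using that riesz by (auto intro: riesz_subspace_sup le_supI1)
      then show ?thesis
        by (intro bexI[of _ "sup a b"]) simp_all
    qed
  qed
qed

lemma order_closure_in_eq_Int:
  assumes F: "riesz_subspace F" and EF: "E \<subseteq> F" and F_regular: "regular_in UNIV F"
  shows "order_closure_in F E = order_closure_in UNIV E \<inter> F"
proof
  show "order_closure_in F E \<subseteq> order_closure_in UNIV E \<inter> F"
    using subset_UNIV F_regular EF by (rule order_closure_in_subset_Int)
  show "order_closure_in UNIV E \<inter> F \<subseteq> order_closure_in F E"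
  proof
    fix x
    assume x: "x \<in> order_closure_in UNIV E \<inter> F"
    have C: "riesz_subspace (order_closure_in UNIV E)"
      using riesz_subspace_UNIV riesz subset_UNIV by (rule riesz_subspace_order_closure_in)
    have "sup x 0 \<in> order_closure_in UNIV E" "sup (- x) 0 \<in> order_closure_in UNIV E"
      using x C by (auto intro: riesz_subspace_sup riesz_subspace_zero riesz_subspace_uminus)
    moreover have "sup x 0 \<in> F" "sup (- x) 0 \<in> F"
      using x F by (auto intro: riesz_subspace_sup riesz_subspace_zero riesz_subspace_uminus)
    ultimately have "sup x 0 \<in> order_closure_in F E" "sup (- x) 0 \<in> order_closure_in F E"
      by (simp_all add: nonneg_mem_order_closure_in[OF F EF])
    then have "sup x 0 - sup (- x) 0 \<in> order_closure_in F E"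
      by (intro riesz_subspace_diff riesz_subspace_order_closure_in[OF F riesz EF])
    moreover have "sup x 0 - sup (- x) 0 = x"
      using vector_lattice.prts[of x] by (simp add: vector_lattice.pprt_def vector_lattice.nprt_def)
    ultimately show "x \<in> order_closure_in F E"
      by simp
  qed
qed

end

theorem corollary9p4:
  fixes F E :: "'a::{ordered_real_vector,lattice} set"
  assumes Fu: "universally_complete (UNIV :: 'a set)"
    and F_sub: "riesz_subspace F"
    and F_arch: "archimedean_on F"
    and F_dense: "order_dense_in (UNIV :: 'a set) F"
    and E_sub: "riesz_subspace E"
    and EF: "E \<subseteq> F"
    and E_reg: "regular_in F E"
  shows "universally_complete (order_closure_in UNIV E)
         \<and> E \<subseteq> order_closure_in UNIV E
         \<and> order_dense_in (order_closure_in UNIV E) E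
         \<and> order_closure_in F E = order_closure_in UNIV E \<inter> F"
proof -
  have complete: "order_complete_on (UNIV :: 'a set)"
    using Fu by (simp add: universally_complete_def)
  have F_regular: "regular_in UNIV F"
    using riesz_subspace_UNIV F_dense by (rule regular_in_if_order_dense)
  interpret regular_riesz_subspace E
    using complete E_sub regular_in_trans[OF EF F_regular E_reg] by unfold_locales
  have "universally_complete (order_closure_in UNIV E)"
    using Fu riesz_subspace_order_closure_in[OF riesz_subspace_UNIV E_sub subset_UNIV]
      order_closed_order_closure_in
    by (rule universally_complete_if_order_closed)
  then show ?thesis
    using subset_order_closure_in order_dense_in_order_closure
      order_closure_in_eq_Int[OF F_sub EF F_regular]
    by blast
qed

end
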